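(* With the notation of the context, the function $f:\mathbb R\times[0,\infty)\to\mathbb R$ satisfies: (i) $f(x,z)\geq x^2$ for all $x\in\mathbb R$, $z\geq 0$; (ii) $f$ is of class $C^2$ and convex; (iii) for every $x\in\mathbb R$: $x\in\bigcup_{n=1}^\infty E_n$ if and only if there exists $z\geq0$ with $f(x,z)=x^2$; (iv) for all $x\in\mathbb R$ and $z\geq0$, if $f(x,z)>x^2$ then $\frac{\partial f}{\partial z}(x,z)<0$.
   Context: Let $\phi:[0,1]\to[0,1]$ be given by: $\phi(\alpha)$ is the unique real $x$ with $2x^3+x=\frac{1-\alpha}{2-\alpha}$ (a continuous decreasing function). Let $F_1\subset F_2\subset\cdots$ be closed subsets of $[0,1]$, and put $E_n=(\mathbb R\setminus(-1,2))\cup\phi(F_n)$. Define $a_n(x)=\max(E_n\cap(-\infty,x])$ and $b_n(x)=\min(E_n\cap[x,\infty))$ for $x\in\mathbb R$. Put $g_n(x)=(x-a_n(x))^3(b_n(x)-x)^3$ and $h_n(z)=((n-z)_+)^3$, where $t_+=\max(t,0)$. Let $(c_n)$ be a sequence of positive reals with $\sum_{n=1}^\infty\frac{81^2}{6}n^3c_n<1$. Define $$f(x,z)=x^2+\sum_{n=1}^\infty c_n g_n(x)h_n(z),\qquad x\in\mathbb R,\ z\geq0.$$ *)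

theory Defs
  imports "HOL-Analysis.Analysis"
begin

definition phi :: "real \<Rightarrow> real" where
  "phi \<alpha> = (THE x. 2 * x ^ 3 + x = (1 - \<alpha>) / (2 - \<alpha>))"

definition E_set :: "(nat \<Rightarrow> real set) \<Rightarrow> nat \<Rightarrow> real set" where
  "E_set F n = (- {-1<..<2}) \<union> phi ` F n"

definition a_fun :: "(nat \<Rightarrow> real set) \<Rightarrow> nat \<Rightarrow> real \<Rightarrow> real" where
  "a_fun F n x = (GREATEST y. y \<in> E_set F n \<and> y \<le> x)"

definition b_fun :: "(nat \<Rightarrow> real set) \<Rightarrow> nat \<Rightarrow> real \<Rightarrow> real" where
  "b_fun F n x = (LEAST y. y \<in> E_set F n \<and> x \<le> y)"

definition g_fun :: "(nat \<Rightarrow> real set) \<Rightarrow> nat \<Rightarrow> real \<Rightarrow> real" where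
  "g_fun F n x = (x - a_fun F n x) ^ 3 * (b_fun F n x - x) ^ 3"

definition h_fun :: "nat \<Rightarrow> real \<Rightarrow> real" where
  "h_fun n z = (max (real n - z) 0) ^ 3"

definition f_fun :: "(nat \<Rightarrow> real set) \<Rightarrow> (nat \<Rightarrow> real) \<Rightarrow> real \<Rightarrow> real \<Rightarrow> real" where
  "f_fun F c x z = x ^ 2 + (\<Sum>k. c (Suc k) * g_fun F (Suc k) x * h_fun (Suc k) z)"

definition C2_on :: "('a::real_normed_vector) set \<Rightarrow> ('a \<Rightarrow> real) \<Rightarrow> bool" where
  "C2_on S u \<longleftrightarrow> (\<exists>u' u''.
      (\<forall>p\<in>S. (u has_derivative blinfun_apply (u' p)) (at p within S)) \<and>
      (\<forall>p\<in>S. (u' has_derivative blinfun_apply (u'' p)) (at p within S)) \<and>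
      continuous_on S u'')"

end

theory Submission
  imports Defs
begin

text \<open>
  Write f(x,z) = x^2 + sum_k T_k(x,z) with T_k = c_k g_k(x) h_k(z).
  Each E_n is closed and contains the complement of (-1,2), so its gap function
  g(x) = (x - a(x))^3 (b(x) - x)^3 is a nonnegative C^2 function vanishing exactly
  on E_n: inside a gap it is a polynomial, and near a point of E_n it and its
  first two derivatives are flat.  The truncated cube h_n(z) = ((n - z)_+)^3 is
  C^2 and nonincreasing.  Uniform bounds on the terms and on their partial
  derivatives (Weierstrass M-test) give that f is C^2 on R x [0,oo).  Convexity
  follows from an explicit polynomial inequality showing that every
  w_k x^2 + T_k is convex, where sum_k w_k < 1 is exactly the assumption on c.
  Nonnegativity of the terms gives (i) and, since h_k(z) = 0 iff z >= k and the
  sets E_n increase, also (iii).  Finally the z-derivatives of the terms are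
  nonpositive, and negative for any term with T_k > 0, which gives (iv).
  The file develops, in this order, flatness criteria and truncated powers in
  one variable, gap functions of closed sets, the map phi, termwise
  differentiation of series in the plane and convexity tools; the locale
  construction then fixes the data of the theorem and proves (i)-(iv), which
  lemma6 collects.
\<close>

lemma flat_has_derivative_zero:
  fixes F :: "real \<Rightarrow> real"
  assumes F0: "F x = 0" and bd: "\<And>y. \<bar>y - x\<bar> < 1 \<Longrightarrow> \<bar>F y\<bar> \<le> C * (y - x)^2"
  shows "(F has_real_derivative 0) (at x)"
  unfolding DERIV_def
proof (rule Lim_null_comparison)
  have key: "norm ((F (x + h) - F x) / h) \<le> C * \<bar>h\<bar>" if h: "h \<noteq> 0" "\<bar>h\<bar> < 1" for h
  proof -
    have "\<bar>F (x + h)\<bar> \<le> C * h^2" using bd[of "x+h"] h by simp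
    then have "\<bar>F (x + h)\<bar> / \<bar>h\<bar> \<le> C * h^2 / \<bar>h\<bar>" by (intro divide_right_mono) auto
    also have "C * h^2 / \<bar>h\<bar> = C * \<bar>h\<bar>"
    proof -
      have "h^2 = \<bar>h\<bar> * \<bar>h\<bar>" by (simp add: power2_eq_square)
      then have "C * h^2 / \<bar>h\<bar> = (C * \<bar>h\<bar>) * \<bar>h\<bar> / \<bar>h\<bar>" by (simp only: mult.assoc)
      also have "\<dots> = C * \<bar>h\<bar>" using h by (intro nonzero_mult_div_cancel_right) simp
      finally show ?thesis .
    qed
    finally show ?thesis using F0 by (simp add: abs_divide)
  qed
  show "\<forall>\<^sub>F h in at 0. norm ((F (x + h) - F x) / h) \<le> C * \<bar>h\<bar>"
    unfolding eventually_at using key by (intro exI[of _ 1]) auto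
  show "((\<lambda>h. C * \<bar>h\<bar>) \<longlongrightarrow> 0) (at 0)"
    by (auto intro!: tendsto_eq_intros)
qed

lemma flat_isCont:
  fixes F :: "real \<Rightarrow> real"
  assumes F0: "F x = 0" and bd: "\<And>y. \<bar>F y\<bar> \<le> C * \<bar>y - x\<bar>"
  shows "isCont F x"
  unfolding isCont_iff F0
proof (rule Lim_null_comparison)
  show "\<forall>\<^sub>F h in at 0. norm (F (x + h)) \<le> C * \<bar>h\<bar>"
    using bd[of "x + _"] by (auto intro!: always_eventually)
  show "((\<lambda>h. C * \<bar>h\<bar>) \<longlongrightarrow> 0) (at 0)"
    by (auto intro!: tendsto_eq_intros)
qed

lemma truncated_power_deriv:
  assumes n: "1 \<le> n"
  shows "((\<lambda>t::real. (max t 0) ^ Suc n) has_real_derivative real (Suc n) * (max t 0) ^ n) (at t)"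
proof (cases "t = 0")
  case True
  have "((\<lambda>t::real. (max t 0) ^ Suc n) has_real_derivative 0) (at t)"
  proof (rule flat_has_derivative_zero[where C=1])
    fix y :: real assume y: "\<bar>y - t\<bar> < 1"
    define m where "m = max y 0"
    have m: "0 \<le> m" "m \<le> \<bar>y\<bar>" "m \<le> 1" using y True by (auto simp: m_def)
    have "m ^ Suc n = m^2 * m ^ (n - 1)" using n by (simp add: power_add[symmetric])
    also have "\<dots> \<le> m^2 * 1" using m by (intro mult_left_mono power_le_one) auto
    also have "\<dots> \<le> \<bar>y\<bar>^2" using power_mono[OF m(2) m(1), of 2] by simp
    finally show "\<bar>(max y 0) ^ Suc n\<bar> \<le> 1 * (y - t)^2" using True m by (simp add: m_def)
  qed (use True in simp)
  then show ?thesis using True n by (simp add: power_0_left)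
next
  case False
  show ?thesis
  proof (cases "t > 0")
    case True
    have d: "((\<lambda>t::real. t ^ Suc n) has_real_derivative real (Suc n) * (max t 0) ^ n) (at t)"
      using DERIV_pow[of "Suc n" t] True by simp
    show ?thesis
      by (rule has_field_derivative_transform_within_open[OF d, of "{0<..}"]) (use True in auto)
  next
    case False
    then have t: "t < 0" using \<open>t \<noteq> 0\<close> by simp
    have d: "((\<lambda>t::real. 0) has_real_derivative real (Suc n) * (max t 0) ^ n) (at t)"
      using t n by (simp add: power_0_left)
    show ?thesis
      by (rule has_field_derivative_transform_within_open[OF d, of "{..<0}"]) (use t in auto)
  qed
qed

definition h1_fun :: "nat \<Rightarrow> real \<Rightarrow> real" where
  "h1_fun n z = - 3 * (max (real n - z) 0)^2"
definition h2_fun :: "nat \<Rightarrow> real \<Rightarrow> real" where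
  "h2_fun n z = 6 * max (real n - z) 0"

lemma h_fun_deriv: "(h_fun n has_real_derivative h1_fun n z) (at z)"
proof -
  have "((\<lambda>z. (max (real n - z) 0) ^ 3) has_real_derivative 3 * (max (real n - z) 0)^2 * (-1)) (at z)"
    by (rule DERIV_chain2[OF truncated_power_deriv[of 2, simplified]]) (auto intro!: derivative_eq_intros)
  then show ?thesis unfolding h_fun_def h1_fun_def by (simp add: mult.commute)
qed

lemma h1_fun_deriv: "(h1_fun n has_real_derivative h2_fun n z) (at z)"
proof -
  have square_deriv: "((\<lambda>t::real. (max t 0)^2) has_real_derivative 2 * max t 0) (at t)" for t
    using truncated_power_deriv[of 1 t] by (simp add: numeral_2_eq_2)
  have "((\<lambda>z. (max (real n - z) 0)^2) has_real_derivative 2 * max (real n - z) 0 * (-1)) (at z)"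
    by (rule DERIV_chain2[OF square_deriv]) (auto intro!: derivative_eq_intros)
  then have "((\<lambda>z. -3 * (max (real n - z) 0)^2) has_real_derivative -3 * (2 * max (real n - z) 0 * (-1))) (at z)"
    by (rule DERIV_cmult)
  then show ?thesis unfolding h2_fun_def h1_fun_def by simp
qed

lemma h2_fun_isCont: "isCont (h2_fun n) z"
  unfolding h2_fun_def by (intro continuous_intros)

lemma h_fun_bounds:
  assumes "0 \<le> z" "1 \<le> n"
  shows "\<bar>h_fun n z\<bar> \<le> 6 * real n ^ 3" "\<bar>h1_fun n z\<bar> \<le> 6 * real n ^ 3" "\<bar>h2_fun n z\<bar> \<le> 6 * real n ^ 3"
proof -
  define m where "m = max (real n - z) 0"
  have m: "0 \<le> m" "m \<le> real n" using assms by (auto simp: m_def)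
  have n1: "1 \<le> real n" using assms by simp
  have m3: "m^3 \<le> real n ^ 3" using m by (intro power_mono) auto
  have m2: "m^2 \<le> real n ^ 2" using m by (intro power_mono) auto
  have n23: "real n ^ 2 \<le> real n ^ 3" using n1 by (intro power_increasing) auto
  have n13: "real n \<le> real n ^ 3" using power_increasing[of 1 3 "real n"] n1 by simp
  have "\<bar>h_fun n z\<bar> = m^3" using m unfolding h_fun_def m_def[symmetric] by simp
  then show "\<bar>h_fun n z\<bar> \<le> 6 * real n ^ 3" using m3 zero_le_power[of "real n" 3] by linarith
  have "\<bar>h1_fun n z\<bar> = 3 * m^2" unfolding h1_fun_def m_def[symmetric] by simp
  then show "\<bar>h1_fun n z\<bar> \<le> 6 * real n ^ 3" using m2 n23 by linarith
  have "\<bar>h2_fun n z\<bar> = 6 * m" unfolding h2_fun_def m_def[symmetric] using m by simp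
  then show "\<bar>h2_fun n z\<bar> \<le> 6 * real n ^ 3" using m n13 by linarith
qed

section \<open>Gap functions of closed sets\<close>

text \<open>
  For u = x - a and v = b - x the gap function and its first two derivatives
  are the polynomials u^3 v^3, 3 u^2 v^2 (v - u) and 6 u v ((v - u)^2 - u v).
\<close>
lemma gap_poly_bounds_ordered:
  fixes u v :: real
  assumes u0: "0 \<le> u" and uv: "u \<le> v" and s3: "u + v \<le> 3"
  shows "\<bar>u^3 * v^3\<bar> \<le> 81 * u^2"
    "\<bar>3 * u^2 * v^2 * (v - u)\<bar> \<le> 81 * u^2"
    "\<bar>6 * u * v * ((v - u)^2 - u * v)\<bar> \<le> 162 * u"
proof -
  have v3: "v \<le> 3" "0 \<le> v" and u3: "u \<le> 3" using assms by auto
  have v2: "v^2 \<le> 9" using power_mono[OF v3(1) v3(2), of 2] by simp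
  have v33: "v^3 \<le> 27" using power_mono[OF v3(1) v3(2), of 3] by simp
  have "u * v^3 \<le> 3 * 27" by (rule mult_mono) (use u3 v33 v3 in auto)
  then have "u^2 * (u * v^3) \<le> u^2 * 81" by (intro mult_left_mono) auto
  moreover have "\<bar>u^3 * v^3\<bar> = u^2 * (u * v^3)"
    using u0 v3 by (simp add: power3_eq_cube power2_eq_square)
  ultimately show "\<bar>u^3 * v^3\<bar> \<le> 81 * u^2" by simp
  have "v^2 * (v - u) \<le> 9 * 3" by (rule mult_mono) (use v2 v3 uv u0 in auto)
  then have "3 * u^2 * (v^2 * (v - u)) \<le> 3 * u^2 * 27" by (intro mult_left_mono) auto
  moreover have "\<bar>3 * u^2 * v^2 * (v - u)\<bar> = 3 * u^2 * (v^2 * (v - u))"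
    using u0 uv by (simp add: abs_mult)
  ultimately show "\<bar>3 * u^2 * v^2 * (v - u)\<bar> \<le> 81 * u^2" by simp
  have d: "(v - u)^2 \<le> 9" using power_mono[of "v-u" 3 2] uv v3 u0 by simp
  have e: "u * v \<le> 9" using mult_mono[OF u3 v3(1)] u0 v3 by simp
  have X: "\<bar>(v - u)^2 - u * v\<bar> \<le> 9"
    using d e zero_le_power2[of "v-u"] mult_nonneg_nonneg[OF u0 v3(2)] unfolding abs_le_iff by linarith
  have "v * \<bar>(v - u)^2 - u * v\<bar> \<le> 3 * 9" by (rule mult_mono) (use v3 X in auto)
  then have "6 * u * (v * \<bar>(v - u)^2 - u * v\<bar>) \<le> 6 * u * 27" by (intro mult_left_mono) (use u0 in auto)
  moreover have "\<bar>6 * u * v * ((v - u)^2 - u * v)\<bar> = 6 * u * (v * \<bar>(v - u)^2 - u * v\<bar>)"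
    using u0 v3 by (simp add: abs_mult)
  ultimately show "\<bar>6 * u * v * ((v - u)^2 - u * v)\<bar> \<le> 162 * u" by simp
qed

lemma gap_poly_bounds:
  fixes u v :: real
  assumes u0: "0 \<le> u" and v0: "0 \<le> v" and s3: "u + v \<le> 3"
  shows "\<bar>u^3 * v^3\<bar> \<le> 81 * (min u v)^2"
    "\<bar>3 * u^2 * v^2 * (v - u)\<bar> \<le> 81 * (min u v)^2"
    "\<bar>6 * u * v * ((v - u)^2 - u * v)\<bar> \<le> 162 * min u v"
proof -
  have "\<bar>u^3 * v^3\<bar> \<le> 81 * (min u v)^2 \<and> \<bar>3 * u^2 * v^2 * (v - u)\<bar> \<le> 81 * (min u v)^2
    \<and> \<bar>6 * u * v * ((v - u)^2 - u * v)\<bar> \<le> 162 * min u v"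
  proof (cases "u \<le> v")
    case True then show ?thesis using gap_poly_bounds_ordered[OF u0 True s3] by (simp add: min_def)
  next
    case False
    then have vu: "v \<le> u" and s: "v + u \<le> 3" using s3 by simp_all
    have 1: "\<bar>u^3 * v^3\<bar> = \<bar>v^3 * u^3\<bar>" by (simp add: mult.commute)
    have 2: "\<bar>3 * u^2 * v^2 * (v - u)\<bar> = \<bar>3 * v^2 * u^2 * (u - v)\<bar>"
      by (simp add: abs_mult abs_minus_commute)
    have 3: "\<bar>6 * u * v * ((v - u)^2 - u * v)\<bar> = \<bar>6 * v * u * ((u - v)^2 - v * u)\<bar>"
      by (simp add: power2_commute mult.commute mult.left_commute)
    have 4: "min u v = v" using vu by simp
    show ?thesis using gap_poly_bounds_ordered[OF v0 vu s] unfolding 1 2 3 4 by simp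
  qed
  then show "\<bar>u^3 * v^3\<bar> \<le> 81 * (min u v)^2"
    "\<bar>3 * u^2 * v^2 * (v - u)\<bar> \<le> 81 * (min u v)^2"
    "\<bar>6 * u * v * ((v - u)^2 - u * v)\<bar> \<le> 162 * min u v" by auto
qed

definition lower_pt :: "real set \<Rightarrow> real \<Rightarrow> real" where
  "lower_pt E x = (GREATEST y. y \<in> E \<and> y \<le> x)"
definition upper_pt :: "real set \<Rightarrow> real \<Rightarrow> real" where
  "upper_pt E x = (LEAST y. y \<in> E \<and> x \<le> y)"

definition gap0 :: "real set \<Rightarrow> real \<Rightarrow> real" where
  "gap0 E x = (x - lower_pt E x)^3 * (upper_pt E x - x)^3"
definition gap1 :: "real set \<Rightarrow> real \<Rightarrow> real" where
  "gap1 E x = 3 * (x - lower_pt E x)^2 * (upper_pt E x - x)^2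
     * ((upper_pt E x - x) - (x - lower_pt E x))"
definition gap2 :: "real set \<Rightarrow> real \<Rightarrow> real" where
  "gap2 E x = 6 * (x - lower_pt E x) * (upper_pt E x - x)
     * (((upper_pt E x - x) - (x - lower_pt E x))^2 - (x - lower_pt E x) * (upper_pt E x - x))"

text \<open>Closed sets containing everything outside (-1,2), like all E_n; every bounded gap has length at most 3.\<close>
locale gap_set =
  fixes E :: "real set"
  assumes closed_E: "closed E" and outside_E: "- {-1<..<2} \<subseteq> E"
begin

lemma lower_pt_props: "lower_pt E x \<in> E" "lower_pt E x \<le> x" "\<And>y. y \<in> E \<Longrightarrow> y \<le> x \<Longrightarrow> y \<le> lower_pt E x"
proof -
  define S where "S = E \<inter> {..x}"
  have "min x (-1) \<in> S" using outside_E unfolding S_def by auto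
  then have ne: "S \<noteq> {}" by auto
  have bd: "bdd_above S" unfolding S_def by auto
  have SS: "Sup S \<in> S" using closed_contains_Sup[OF ne bd] closed_E unfolding S_def by auto
  have ub: "\<And>y. y \<in> S \<Longrightarrow> y \<le> Sup S" using bd by (simp add: cSup_upper)
  have eq: "lower_pt E x = Sup S" unfolding lower_pt_def
    by (rule Greatest_equality) (use SS ub in \<open>auto simp: S_def\<close>)
  show "lower_pt E x \<in> E" "lower_pt E x \<le> x" "\<And>y. y \<in> E \<Longrightarrow> y \<le> x \<Longrightarrow> y \<le> lower_pt E x"
    using SS ub eq by (auto simp: S_def)
qed

lemma upper_pt_props: "upper_pt E x \<in> E" "x \<le> upper_pt E x" "\<And>y. y \<in> E \<Longrightarrow> x \<le> y \<Longrightarrow> upper_pt E x \<le> y"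
proof -
  define S where "S = E \<inter> {x..}"
  have "max x 2 \<in> S" using outside_E unfolding S_def by auto
  then have ne: "S \<noteq> {}" by auto
  have bd: "bdd_below S" unfolding S_def by auto
  have SS: "Inf S \<in> S" using closed_contains_Inf[OF ne bd] closed_E unfolding S_def by auto
  have lb: "\<And>y. y \<in> S \<Longrightarrow> Inf S \<le> y" using bd by (simp add: cInf_lower)
  have eq: "upper_pt E x = Inf S" unfolding upper_pt_def
    by (rule Least_equality) (use SS lb in \<open>auto simp: S_def\<close>)
  show "upper_pt E x \<in> E" "x \<le> upper_pt E x" "\<And>y. y \<in> E \<Longrightarrow> x \<le> y \<Longrightarrow> upper_pt E x \<le> y"
    using SS lb eq by (auto simp: S_def)
qed

lemma pts_in_E: "x \<in> E \<Longrightarrow> lower_pt E x = x \<and> upper_pt E x = x"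
  using lower_pt_props[of x] upper_pt_props[of x] by force

lemma gap_coords: "0 \<le> x - lower_pt E x" "0 \<le> upper_pt E x - x" "upper_pt E x - lower_pt E x \<le> 3"
proof -
  show "0 \<le> x - lower_pt E x" "0 \<le> upper_pt E x - x" using lower_pt_props upper_pt_props by auto
  show "upper_pt E x - lower_pt E x \<le> 3"
  proof (cases "x \<in> E")
    case True then show ?thesis using pts_in_E by simp
  next
    case False
    then have "-1 < x" "x < 2" using outside_E by auto
    moreover have "-1 \<in> E" "2 \<in> E" using outside_E by auto
    ultimately have "-1 \<le> lower_pt E x" "upper_pt E x \<le> 2" using lower_pt_props(3) upper_pt_props(3) by auto
    then show ?thesis by simp
  qed
qed

lemma gap_interval:
  assumes "x \<notin> E"
  shows "lower_pt E x < x" "x < upper_pt E x"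
    "\<And>y. lower_pt E x < y \<Longrightarrow> y < upper_pt E x \<Longrightarrow>
           y \<notin> E \<and> lower_pt E y = lower_pt E x \<and> upper_pt E y = upper_pt E x"
proof -
  show "lower_pt E x < x" using lower_pt_props[of x] assms by (metis order_less_le)
  show "x < upper_pt E x" using upper_pt_props[of x] assms by (metis order_less_le)
  have gap: "z \<notin> E" if z: "lower_pt E x < z" "z < upper_pt E x" for z
    using lower_pt_props(3)[of z x] upper_pt_props(3)[of z x] z by force
  fix y assume y: "lower_pt E x < y" "y < upper_pt E x"
  have "lower_pt E y = lower_pt E x"
    using lower_pt_props(3)[OF lower_pt_props(1)[of x], of y] lower_pt_props[of y] gap[of "lower_pt E y"] y
    by force
  moreover have "upper_pt E y = upper_pt E x"
    using upper_pt_props(3)[OF upper_pt_props(1)[of x], of y] upper_pt_props[of y] gap[of "upper_pt E y"] y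
    by force
  ultimately show "y \<notin> E \<and> lower_pt E y = lower_pt E x \<and> upper_pt E y = upper_pt E x"
    using gap y by blast
qed

lemma gap_dist_le:
  assumes "x \<in> E"
  shows "min (y - lower_pt E y) (upper_pt E y - y) \<le> \<bar>y - x\<bar>"
  using lower_pt_props(3)[OF assms, of y] upper_pt_props(3)[OF assms, of y] by (cases "x \<le> y") auto

lemma gap_dist_sq_le:
  assumes "x \<in> E"
  shows "(min (y - lower_pt E y) (upper_pt E y - y))^2 \<le> (y - x)^2"
proof -
  have "0 \<le> min (y - lower_pt E y) (upper_pt E y - y)" using gap_coords[of y] by auto
  then have "(min (y - lower_pt E y) (upper_pt E y - y))^2 \<le> \<bar>y - x\<bar>^2"
    using gap_dist_le[OF assms, of y] by (intro power_mono) auto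
  then show ?thesis by simp
qed

lemma gap_bounds_near:
  "\<bar>gap0 E y\<bar> \<le> 81 * (min (y - lower_pt E y) (upper_pt E y - y))^2"
  "\<bar>gap1 E y\<bar> \<le> 81 * (min (y - lower_pt E y) (upper_pt E y - y))^2"
  "\<bar>gap2 E y\<bar> \<le> 162 * min (y - lower_pt E y) (upper_pt E y - y)"
  using gap_poly_bounds[OF gap_coords(1) gap_coords(2), of y y] gap_coords(3)[of y]
  unfolding gap0_def gap1_def gap2_def by auto

lemma gap_bounds_uniform: "\<bar>gap0 E y\<bar> \<le> 1000" "\<bar>gap1 E y\<bar> \<le> 1000" "\<bar>gap2 E y\<bar> \<le> 1000"
proof -
  define m where "m = min (y - lower_pt E y) (upper_pt E y - y)"
  have m: "0 \<le> m" "m \<le> 3" using gap_coords[of y] unfolding m_def by auto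
  then have "m^2 \<le> 9" using power_mono[OF m(2) m(1), of 2] by simp
  then show "\<bar>gap0 E y\<bar> \<le> 1000" "\<bar>gap1 E y\<bar> \<le> 1000" "\<bar>gap2 E y\<bar> \<le> 1000"
    using gap_bounds_near[of y] m unfolding m_def[symmetric] by linarith+
qed

lemma gap0_nonneg: "0 \<le> gap0 E y"
  using gap_coords[of y] unfolding gap0_def by auto

lemma gap0_eq_0_iff: "gap0 E y = 0 \<longleftrightarrow> y \<in> E"
proof
  assume "gap0 E y = 0"
  then have "y - lower_pt E y = 0 \<or> upper_pt E y - y = 0" unfolding gap0_def by simp
  then show "y \<in> E" using lower_pt_props(1)[of y] upper_pt_props(1)[of y] by auto
qed (use pts_in_E in \<open>simp add: gap0_def\<close>)

lemma gap0_deriv: "(gap0 E has_real_derivative gap1 E x) (at x)"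
proof (cases "x \<in> E")
  case True
  have "(gap0 E has_real_derivative 0) (at x)"
  proof (rule flat_has_derivative_zero)
    show "gap0 E x = 0" using True gap0_eq_0_iff by simp
    show "\<bar>gap0 E y\<bar> \<le> 81 * (y - x)^2" for y
      using gap_bounds_near(1)[of y] gap_dist_sq_le[OF True, of y] by linarith
  qed
  then show ?thesis using pts_in_E[OF True] by (simp add: gap1_def)
next
  case False
  note gap = gap_interval[OF False]
  have poly: "((\<lambda>y. (y - a)^3 * (b - y)^3) has_real_derivative
      3 * (x - a)^2 * (b - x)^2 * ((b - x) - (x - a))) (at x)" for a b
    by (auto intro!: derivative_eq_intros simp: power2_eq_square power3_eq_cube algebra_simps)
  show ?thesis unfolding gap1_def
  proof (rule has_field_derivative_transform_within_open[OF poly, of "{lower_pt E x<..<upper_pt E x}"])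
    show "x \<in> {lower_pt E x<..<upper_pt E x}" using gap(1,2) by simp
    show "(y - lower_pt E x)^3 * (upper_pt E x - y)^3 = gap0 E y"
      if "y \<in> {lower_pt E x<..<upper_pt E x}" for y
      using gap(3)[of y] that unfolding gap0_def by simp
  qed simp
qed

lemma gap1_deriv: "(gap1 E has_real_derivative gap2 E x) (at x)"
proof (cases "x \<in> E")
  case True
  have "(gap1 E has_real_derivative 0) (at x)"
  proof (rule flat_has_derivative_zero)
    show "gap1 E x = 0" using pts_in_E[OF True] by (simp add: gap1_def)
    show "\<bar>gap1 E y\<bar> \<le> 81 * (y - x)^2" for y
      using gap_bounds_near(2)[of y] gap_dist_sq_le[OF True, of y] by linarith
  qed
  then show ?thesis using pts_in_E[OF True] by (simp add: gap2_def)
next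
  case False
  note gap = gap_interval[OF False]
  have poly: "((\<lambda>y. 3 * (y - a)^2 * (b - y)^2 * ((b - y) - (y - a))) has_real_derivative
      6 * (x - a) * (b - x) * (((b - x) - (x - a))^2 - (x - a) * (b - x))) (at x)" for a b
    by (auto intro!: derivative_eq_intros simp: power2_eq_square power3_eq_cube algebra_simps)
  show ?thesis unfolding gap2_def
  proof (rule has_field_derivative_transform_within_open[OF poly, of "{lower_pt E x<..<upper_pt E x}"])
    show "x \<in> {lower_pt E x<..<upper_pt E x}" using gap(1,2) by simp
    show "3 * (y - lower_pt E x)^2 * (upper_pt E x - y)^2 * ((upper_pt E x - y) - (y - lower_pt E x))
        = gap1 E y" if "y \<in> {lower_pt E x<..<upper_pt E x}" for y
      using gap(3)[of y] that unfolding gap1_def by simp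
  qed simp
qed

lemma gap2_isCont: "isCont (gap2 E) x"
proof (cases "x \<in> E")
  case True
  show ?thesis
  proof (rule flat_isCont)
    show "gap2 E x = 0" using pts_in_E[OF True] by (simp add: gap2_def)
    show "\<bar>gap2 E y\<bar> \<le> 162 * \<bar>y - x\<bar>" for y
      using gap_bounds_near(3)[of y] mult_left_mono[OF gap_dist_le[OF True, of y], of 162] by linarith
  qed
next
  case False
  note gap = gap_interval[OF False]
  let ?a = "lower_pt E x" and ?b = "upper_pt E x"
  have "\<forall>\<^sub>F y in nhds x. 6 * (y - ?a) * (?b - y) * (((?b - y) - (y - ?a))^2 - (y - ?a) * (?b - y)) = gap2 E y"
    unfolding eventually_nhds
  proof (intro exI[of _ "{?a<..<?b}"] conjI ballI)
    show "x \<in> {?a<..<?b}" using gap(1,2) by simp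
    fix y assume "y \<in> {?a<..<?b}"
    then have "lower_pt E y = ?a" "upper_pt E y = ?b" using gap(3)[of y] by auto
    then show "6 * (y - ?a) * (?b - y) * (((?b - y) - (y - ?a))^2 - (y - ?a) * (?b - y)) = gap2 E y"
      unfolding gap2_def by simp
  qed simp
  then have "isCont (\<lambda>y. 6 * (y - ?a) * (?b - y) * (((?b - y) - (y - ?a))^2 - (y - ?a) * (?b - y))) x
      = isCont (gap2 E) x"
    by (rule isCont_cong)
  moreover have "isCont (\<lambda>y. 6 * (y - ?a) * (?b - y) * (((?b - y) - (y - ?a))^2 - (y - ?a) * (?b - y))) x"
    by (intro continuous_intros)
  ultimately show ?thesis by simp
qed

end

section \<open>The map phi and the sets E_n\<close>

text \<open>The cubic 2 x^3 + x is strictly increasing; this makes phi well defined and injective.\<close>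
lemma cubic_strict_mono:
  fixes x y :: real
  assumes "x < y"
  shows "2 * x^3 + x < 2 * y^3 + y"
proof -
  have "(x + y)^2 = x^2 + 2 * x * y + y^2" by (simp add: power2_sum)
  then have "0 \<le> x^2 + x * y + y^2"
    using zero_le_power2[of "x + y"] zero_le_power2[of x] zero_le_power2[of y] by linarith
  then have "0 < (y - x) * (2 * (x^2 + x * y + y^2) + 1)" using assms by simp
  also have "\<dots> = (2 * y^3 + y) - (2 * x^3 + x)" by (simp add: power2_eq_square power3_eq_cube algebra_simps)
  finally show ?thesis by simp
qed

lemma cubic_inj:
  fixes x y :: real
  assumes "2 * x^3 + x = 2 * y^3 + y"
  shows "x = y"
proof (cases x y rule: linorder_cases)
  case less then show ?thesis using cubic_strict_mono[OF less] assms by linarith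
next
  case greater then show ?thesis using cubic_strict_mono[OF greater] assms by linarith
qed

lemma phi_eq:
  assumes "0 \<le> \<alpha>" "\<alpha> \<le> 1"
  shows "2 * phi \<alpha> ^ 3 + phi \<alpha> = (1 - \<alpha>) / (2 - \<alpha>)"
proof -
  define q where "q = (1 - \<alpha>) / (2 - \<alpha>)"
  have q: "0 \<le> q" "q \<le> 3" using assms unfolding q_def by (auto simp: divide_simps)
  have "\<exists>x. 0 \<le> x \<and> x \<le> 1 \<and> 2 * x ^ 3 + x = q"
    by (rule IVT') (use q in \<open>auto intro!: continuous_intros\<close>)
  then obtain x0 where x0: "2 * x0 ^ 3 + x0 = q" by blast
  have "phi \<alpha> = x0" unfolding phi_def q_def[symmetric]
    by (rule the_equality[where P="\<lambda>x. 2 * x ^ 3 + x = q", OF x0]) (use x0 cubic_inj in metis)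
  then show ?thesis using x0 q_def by simp
qed

text \<open>phi maps closed subsets of [0,1] to closed sets: phi(A) is the preimage of a compact set under the cubic.\<close>
lemma phi_image_closed:
  assumes "closed A" "A \<subseteq> {0..1}"
  shows "closed (phi ` A)"
proof -
  define q where "q \<alpha> = (1 - \<alpha>) / (2 - \<alpha>)" for \<alpha> :: real
  have phi_A: "2 * phi \<alpha> ^ 3 + phi \<alpha> = q \<alpha>" if "\<alpha> \<in> A" for \<alpha>
    using phi_eq[of \<alpha>] that assms(2) unfolding q_def by auto
  have "\<forall>\<alpha>\<in>A. 2 - \<alpha> \<noteq> 0" using assms(2) by force
  then have "continuous_on A q" unfolding q_def by (intro continuous_intros) auto
  moreover have "compact A"
    using assms bounded_subset[OF bounded_closed_interval] by (simp add: compact_eq_bounded_closed)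
  ultimately have closed_qA: "closed (q ` A)" by (intro compact_imp_closed compact_continuous_image)
  have "phi ` A = (\<lambda>x. 2 * x ^ 3 + x) -` (q ` A)"
  proof (intro set_eqI iffI)
    fix x assume "x \<in> phi ` A"
    then show "x \<in> (\<lambda>x. 2 * x ^ 3 + x) -` q ` A" using phi_A by auto
  next
    fix x assume "x \<in> (\<lambda>x. 2 * x ^ 3 + x) -` q ` A"
    then obtain \<alpha> where "\<alpha> \<in> A" "2 * x ^ 3 + x = q \<alpha>" by auto
    then have "x = phi \<alpha>" using phi_A cubic_inj by metis
    then show "x \<in> phi ` A" using \<open>\<alpha> \<in> A\<close> by simp
  qed
  moreover have "continuous_on UNIV (\<lambda>x::real. 2 * x ^ 3 + x)" by (intro continuous_intros)
  ultimately show ?thesis using closed_vimage[OF closed_qA] by simp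
qed

lemma E_set_gap_set:
  assumes "closed (F n)" "F n \<subseteq> {0..1}"
  shows "gap_set (E_set F n)"
proof
  show "closed (E_set F n)"
    unfolding E_set_def by (intro closed_Un phi_image_closed assms) auto
qed (auto simp: E_set_def)

lemma g_fun_eq_gap0: "g_fun F n = gap0 (E_set F n)"
  by (intro ext) (simp add: g_fun_def gap0_def a_fun_def b_fun_def lower_pt_def upper_pt_def)

section \<open>Series of functions of two variables\<close>

lemma product_has_derivative:
  fixes g h :: "real \<Rightarrow> real"
  assumes "(g has_real_derivative g') (at (fst p))" "(h has_real_derivative h') (at (snd p))"
  shows "((\<lambda>p. c * g (fst p) * h (snd p)) has_derivative
     (\<lambda>d. (c * g' * h (snd p)) * fst d + (c * g (fst p) * h') * snd d)) (at p within S)"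
proof -
  have "((\<lambda>p. g (fst p)) has_derivative (\<lambda>d. fst d * g')) (at p within S)"
    by (rule DERIV_compose_FDERIV[where g=fst, OF assms(1)]) (auto intro!: derivative_eq_intros)
  moreover have "((\<lambda>p. h (snd p)) has_derivative (\<lambda>d. snd d * h')) (at p within S)"
    by (rule DERIV_compose_FDERIV[where g=snd, OF assms(2)]) (auto intro!: derivative_eq_intros)
  ultimately have "((\<lambda>p. c * g (fst p) * h (snd p)) has_derivative
     (\<lambda>d. c * g (fst p) * (snd d * h') + (c * (fst d * g')) * h (snd p))) (at p within S)"
    by (intro has_derivative_mult has_derivative_mult_right)
  then show ?thesis
    by (rule has_derivative_eq_rhs) (auto simp: algebra_simps)
qed

lemma uniform_convergence_linear_forms:
  fixes P Q :: "nat \<Rightarrow> 'a \<Rightarrow> real"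
  assumes uP: "uniform_limit S (\<lambda>n x. \<Sum>i<n. P i x) (\<lambda>x. \<Sum>i. P i x) sequentially"
    and uQ: "uniform_limit S (\<lambda>n x. \<Sum>i<n. Q i x) (\<lambda>x. \<Sum>i. Q i x) sequentially"
    and e: "e > 0"
  shows "\<forall>\<^sub>F n in sequentially. \<forall>x\<in>S. \<forall>h :: real \<times> real.
      norm ((\<Sum>i<n. P i x * fst h + Q i x * snd h) - ((\<Sum>k. P k x) * fst h + (\<Sum>k. Q k x) * snd h))
        \<le> e * norm h"
proof -
  have e2: "e / 2 > 0" using e by simp
  from uniform_limitD[OF uP e2] uniform_limitD[OF uQ e2] show ?thesis
  proof eventually_elim
    case (elim n)
    show ?case
    proof (intro ballI allI)
      fix x h assume x: "x \<in> S"
      define dP where "dP = (\<Sum>i<n. P i x) - (\<Sum>i. P i x)"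
      define dQ where "dQ = (\<Sum>i<n. Q i x) - (\<Sum>i. Q i x)"
      have "\<bar>dP\<bar> \<le> e / 2" "\<bar>dQ\<bar> \<le> e / 2" using elim x by (auto simp: dist_real_def dP_def dQ_def)
      moreover have "\<bar>fst h\<bar> \<le> norm h" "\<bar>snd h\<bar> \<le> norm h"
        using norm_fst_le[of "fst h" "snd h"] norm_snd_le[of "snd h" "fst h"] by simp_all
      ultimately have "\<bar>dP\<bar> * \<bar>fst h\<bar> \<le> e / 2 * norm h" "\<bar>dQ\<bar> * \<bar>snd h\<bar> \<le> e / 2 * norm h"
        using e by (intro mult_mono; simp)+
      moreover have "(\<Sum>i<n. P i x * fst h + Q i x * snd h) - ((\<Sum>k. P k x) * fst h + (\<Sum>k. Q k x) * snd h)
          = dP * fst h + dQ * snd h"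
        unfolding dP_def dQ_def by (simp add: sum.distrib sum_distrib_left algebra_simps)
      ultimately show "norm ((\<Sum>i<n. P i x * fst h + Q i x * snd h) -
          ((\<Sum>k. P k x) * fst h + (\<Sum>k. Q k x) * snd h)) \<le> e * norm h"
        using abs_triangle_ineq[of "dP * fst h" "dQ * snd h"] by (simp add: abs_mult)
    qed
  qed
qed

lemma series_has_derivative:
  fixes T P Q :: "nat \<Rightarrow> real \<times> real \<Rightarrow> real" and S :: "(real \<times> real) set"
  assumes "convex S"
    and der: "\<And>k p. p \<in> S \<Longrightarrow> (T k has_derivative (\<lambda>d. P k p * fst d + Q k p * snd d)) (at p within S)"
    and bP: "\<And>k p. p \<in> S \<Longrightarrow> \<bar>P k p\<bar> \<le> M k"
    and bQ: "\<And>k p. p \<in> S \<Longrightarrow> \<bar>Q k p\<bar> \<le> M k"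
    and "summable M"
    and sT: "\<And>p. p \<in> S \<Longrightarrow> summable (\<lambda>k. T k p)"
    and p: "p \<in> S"
  shows "((\<lambda>p. \<Sum>k. T k p) has_derivative (\<lambda>d. (\<Sum>k. P k p) * fst d + (\<Sum>k. Q k p) * snd d))
    (at p within S)"
proof -
  have "uniform_limit S (\<lambda>n x. \<Sum>i<n. P i x) (\<lambda>x. \<Sum>i. P i x) sequentially"
    "uniform_limit S (\<lambda>n x. \<Sum>i<n. Q i x) (\<lambda>x. \<Sum>i. Q i x) sequentially"
    by (intro Weierstrass_m_test[OF _ \<open>summable M\<close>]; use bP bQ in auto)+
  note unif = uniform_convergence_linear_forms[OF this]
  obtain g where g: "\<forall>x\<in>S. (\<lambda>n. T n x) sums g x \<and>
      (g has_derivative (\<lambda>d. (\<Sum>k. P k x) * fst d + (\<Sum>k. Q k x) * snd d)) (at x within S)"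
    using has_derivative_series[OF \<open>convex S\<close> der unif p summable_sums[OF sT[OF p]]] by blast
  have sum_eq: "(\<Sum>k. T k x) = g x" if "x \<in> S" for x using g that sums_unique by metis
  have "(g has_derivative (\<lambda>d. (\<Sum>k. P k p) * fst d + (\<Sum>k. Q k p) * snd d)) (at p within S)"
    using g p by blast
  then show ?thesis by (rule has_derivative_transform[OF p sum_eq, rotated])
qed

lemma series_continuous_on:
  fixes P :: "nat \<Rightarrow> 'a::topological_space \<Rightarrow> real"
  assumes "\<And>k. continuous_on S (P k)" "\<And>k p. p \<in> S \<Longrightarrow> \<bar>P k p\<bar> \<le> M k" "summable M"
  shows "continuous_on S (\<lambda>p. \<Sum>k. P k p)"
proof (rule uniform_limit_theorem)
  show "uniform_limit S (\<lambda>n x. \<Sum>i<n. P i x) (\<lambda>x. \<Sum>i. P i x) sequentially"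
    by (rule Weierstrass_m_test[OF _ assms(3)]) (use assms(2) in auto)
  show "\<forall>\<^sub>F n in sequentially. continuous_on S (\<lambda>x. \<Sum>i<n. P i x)"
    using assms(1) by (auto intro!: always_eventually continuous_on_sum)
qed simp

lemma C2_on_from_partials:
  fixes u ux uz uxx uxz uzx uzz :: "real \<times> real \<Rightarrow> real"
  assumes du: "\<And>p. p \<in> S \<Longrightarrow> (u has_derivative (\<lambda>d. ux p * fst d + uz p * snd d)) (at p within S)"
    and dux: "\<And>p. p \<in> S \<Longrightarrow> (ux has_derivative (\<lambda>d. uxx p * fst d + uxz p * snd d)) (at p within S)"
    and duz: "\<And>p. p \<in> S \<Longrightarrow> (uz has_derivative (\<lambda>d. uzx p * fst d + uzz p * snd d)) (at p within S)"
    and cont: "continuous_on S uxx" "continuous_on S uxz" "continuous_on S uzx" "continuous_on S uzz"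
  shows "C2_on S u"
proof -
  define Lx where "Lx = (fst_blinfun :: (real \<times> real) \<Rightarrow>\<^sub>L real)"
  define Lz where "Lz = (snd_blinfun :: (real \<times> real) \<Rightarrow>\<^sub>L real)"
  have bl: "bounded_linear (\<lambda>d::real\<times>real. fst d *\<^sub>R (L :: (real \<times> real) \<Rightarrow>\<^sub>L real))"
    "bounded_linear (\<lambda>d::real\<times>real. snd d *\<^sub>R (L :: (real \<times> real) \<Rightarrow>\<^sub>L real))" for L
    by (rule bounded_linear_compose[OF bounded_linear_scaleR_left bounded_linear_fst],
        rule bounded_linear_compose[OF bounded_linear_scaleR_left bounded_linear_snd])
  define B1 where "B1 = Blinfun (\<lambda>d::real\<times>real. fst d *\<^sub>R Lx)"
  define B2 where "B2 = Blinfun (\<lambda>d::real\<times>real. snd d *\<^sub>R Lx)"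
  define B3 where "B3 = Blinfun (\<lambda>d::real\<times>real. fst d *\<^sub>R Lz)"
  define B4 where "B4 = Blinfun (\<lambda>d::real\<times>real. snd d *\<^sub>R Lz)"
  have B: "blinfun_apply B1 = (\<lambda>d. fst d *\<^sub>R Lx)" "blinfun_apply B2 = (\<lambda>d. snd d *\<^sub>R Lx)"
    "blinfun_apply B3 = (\<lambda>d. fst d *\<^sub>R Lz)" "blinfun_apply B4 = (\<lambda>d. snd d *\<^sub>R Lz)"
    unfolding B1_def B2_def B3_def B4_def by (simp_all add: bounded_linear_Blinfun_apply bl)
  define u' where "u' p = ux p *\<^sub>R Lx + uz p *\<^sub>R Lz" for p
  define u'' where "u'' p = uxx p *\<^sub>R B1 + uxz p *\<^sub>R B2 + uzx p *\<^sub>R B3 + uzz p *\<^sub>R B4" for p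
  have "(u has_derivative blinfun_apply (u' p)) (at p within S)" if "p \<in> S" for p
  proof -
    have "blinfun_apply (u' p) = (\<lambda>d. ux p * fst d + uz p * snd d)"
      unfolding u'_def Lx_def Lz_def by (auto simp: blinfun.add_left blinfun.scaleR_left)
    then show ?thesis using du[OF that] by simp
  qed
  moreover have "(u' has_derivative blinfun_apply (u'' p)) (at p within S)" if "p \<in> S" for p
  proof -
    have "((\<lambda>p. ux p *\<^sub>R Lx + uz p *\<^sub>R Lz) has_derivative
      (\<lambda>d. (uxx p * fst d + uxz p * snd d) *\<^sub>R Lx + (uzx p * fst d + uzz p * snd d) *\<^sub>R Lz)) (at p within S)"
      by (intro has_derivative_add has_derivative_scaleR_left dux[OF that] duz[OF that])
    moreover have "blinfun_apply (u'' p) =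
      (\<lambda>d. (uxx p * fst d + uxz p * snd d) *\<^sub>R Lx + (uzx p * fst d + uzz p * snd d) *\<^sub>R Lz)"
      unfolding u''_def by (auto simp: blinfun.add_left blinfun.scaleR_left B algebra_simps)
    ultimately show ?thesis unfolding u'_def[abs_def] by simp
  qed
  moreover have "continuous_on S u''"
    unfolding u''_def[abs_def] using cont
    by (intro continuous_on_add continuous_on_scaleR continuous_on_const) auto
  ultimately show ?thesis unfolding C2_on_def by blast
qed

section \<open>Convexity\<close>

lemma convex_on_cong_on:
  assumes "convex_on A f" "\<And>x. x \<in> A \<Longrightarrow> f x = g x"
  shows "convex_on A g"
  using assms unfolding convex_on_def by (auto simp: convex_def)

lemma convex_on_suminf:
  fixes Q :: "nat \<Rightarrow> 'a::real_vector \<Rightarrow> real"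
  assumes cA: "convex A" and Q: "\<And>k. convex_on A (Q k)"
    and s: "\<And>p. p \<in> A \<Longrightarrow> summable (\<lambda>k. Q k p)"
  shows "convex_on A (\<lambda>p. \<Sum>k. Q k p)"
proof (rule convex_onI[OF _ cA])
  fix t :: real and x y assume t: "0 < t" "t < 1" and xy: "x \<in> A" "y \<in> A"
  have m: "(1 - t) *\<^sub>R x + t *\<^sub>R y \<in> A" using cA xy t by (intro convexD) auto
  have sx: "summable (\<lambda>k. (1 - t) * Q k x)" using s[OF xy(1)] by (rule summable_mult)
  have sy: "summable (\<lambda>k. t * Q k y)" using s[OF xy(2)] by (rule summable_mult)
  have "(\<Sum>k. Q k ((1 - t) *\<^sub>R x + t *\<^sub>R y)) \<le> (\<Sum>k. (1 - t) * Q k x + t * Q k y)"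
    by (rule suminf_le) (use convex_onD[OF Q, of t x y] t xy s[OF m] summable_add[OF sx sy] in auto)
  also have "\<dots> = (\<Sum>k. (1 - t) * Q k x) + (\<Sum>k. t * Q k y)" by (rule suminf_add[OF sx sy, symmetric])
  also have "\<dots> = (1 - t) * (\<Sum>k. Q k x) + t * (\<Sum>k. Q k y)"
    using suminf_mult[OF s[OF xy(1)], of "1 - t"] suminf_mult[OF s[OF xy(2)], of t] by simp
  finally show "(\<Sum>k. Q k ((1 - t) *\<^sub>R x + t *\<^sub>R y)) \<le> (1 - t) * (\<Sum>k. Q k x) + t * (\<Sum>k. Q k y)" .
qed

lemma convex_on_segmentsI:
  fixes f :: "'a::real_vector \<Rightarrow> real"
  assumes "convex S"
    and seg: "\<And>p q. p \<in> S \<Longrightarrow> q \<in> S \<Longrightarrow> convex_on {0..1} (\<lambda>s. f ((1 - s) *\<^sub>R p + s *\<^sub>R q))"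
  shows "convex_on S f"
proof (rule convex_onI[OF _ assms(1)])
  fix t :: real and p q assume t: "0 < t" "t < 1" and pq: "p \<in> S" "q \<in> S"
  show "f ((1 - t) *\<^sub>R p + t *\<^sub>R q) \<le> (1 - t) * f p + t * f q"
    using convex_onD[OF seg[OF pq], of t 0 1] t by simp
qed

lemma convex_on_fst_square: "convex A \<Longrightarrow> convex_on A (\<lambda>p::real \<times> 'b::real_vector. (fst p)^2)"
proof (rule convex_onI)
  fix t :: real and x y :: "real \<times> 'b" assume t: "0 < t" "t < 1"
  have "(1 - t) * (fst x)^2 + t * (fst y)^2 - ((1 - t) * fst x + t * fst y)^2
      = (1 - t) * t * (fst x - fst y)^2"
    by (simp add: power2_eq_square algebra_simps)
  moreover have "0 \<le> (1 - t) * t * (fst x - fst y)^2" using t by simp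
  ultimately show "(fst ((1 - t) *\<^sub>R x + t *\<^sub>R y))^2 \<le> (1 - t) * (fst x)^2 + t * (fst y)^2" by simp
qed

text \<open>
  The key inequality: along a line with direction (A,B), the second derivative of
  w x^2 + c g(x) h(z) is nonnegative when w = (81^2/6) N^3 c.  Here u, v are the
  gap coordinates of x and m = (N - z)_+ with 0 <= m <= N.  The proof writes the
  expression, minus part of the w-term, as a sum of squares.
\<close>
lemma second_variation_nonneg:
  fixes u v m N c w A B :: real
  assumes u: "0 \<le> u" and v: "0 \<le> v" and uv: "u + v \<le> 3" and m: "0 \<le> m" "m \<le> N"
    and c: "0 < c" and w: "w = 81^2 / 6 * N^3 * c"
  shows "0 \<le> 2 * w * A^2 + c * (6 * u * v * ((v - u)^2 - u * v) * A * A * m^3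
            + 2 * (3 * u^2 * v^2 * (v - u)) * A * (-3 * m^2 * B) + u^3 * v^3 * (6 * m * B * B))"
proof -
  define s where "s = u * v"
  define d where "d = v - u"
  define X where "X = m * A"
  define Y where "Y = s * B"
  define K :: real where "K = 81^2 / 6"
  have s0: "0 \<le> s" unfolding s_def using u v by simp
  have uv9: "(u + v)^2 \<le> 9" using power_mono[of "u + v" 3 2] u v uv by simp
  have "(u + v)^2 - 4 * s = (u - v)^2" unfolding s_def by (simp add: power2_eq_square algebra_simps)
  then have s94: "s \<le> 9/4" using uv9 zero_le_power2[of "u - v"] by linarith
  have "d^2 \<le> (u + v)^2" unfolding d_def using u v by (simp add: power2_eq_square algebra_simps)
  then have d9: "d^2 \<le> 9" using uv9 by simp
  have "s * d^2 \<le> 9/4 * 9" by (rule mult_mono) (use s0 s94 d9 in auto)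
  moreover have "s * s \<le> 9/4 * (9/4)" by (rule mult_mono) (use s0 s94 in auto)
  ultimately have coef: "0 \<le> 2 * K - 15/2 * (s * d^2) - 6 * (s * s)" unfolding K_def by simp
  have sos: "0 \<le> 6 * s * (Y - 3/2 * d * X)^2 + X^2 * (2 * K - 15/2 * (s * d^2) - 6 * (s * s))"
    using s0 coef by (intro add_nonneg_nonneg mult_nonneg_nonneg) auto
  have "K * c * m^3 \<le> K * c * N^3" using m c unfolding K_def by (intro mult_left_mono power_mono) auto
  then have "2 * (K * c * m^3) * A^2 \<le> 2 * (K * c * N^3) * A^2" by (intro mult_right_mono) auto
  then have wK: "2 * K * c * m^3 * A^2 \<le> 2 * w * A^2" unfolding w K_def by (simp add: algebra_simps)
  have "2 * K * c * m^3 * A^2 + c * (6 * u * v * ((v - u)^2 - u * v) * A * A * m^3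
            + 2 * (3 * u^2 * v^2 * (v - u)) * A * (-3 * m^2 * B) + u^3 * v^3 * (6 * m * B * B))
     = c * m * (6 * s * (Y - 3/2 * d * X)^2 + X^2 * (2 * K - 15/2 * (s * d^2) - 6 * (s * s)))"
    unfolding s_def d_def X_def Y_def by algebra
  moreover have "0 \<le> c * m * (6 * s * (Y - 3/2 * d * X)^2 + X^2 * (2 * K - 15/2 * (s * d^2) - 6 * (s * s)))"
    using c m sos by simp
  ultimately show ?thesis using wK by linarith
qed

section \<open>The function f\<close>

text \<open>The hypotheses of the theorem.  The k-th term of the series belongs to the index n = k + 1.\<close>
locale construction =
  fixes F :: "nat \<Rightarrow> real set" and c :: "nat \<Rightarrow> real"
  assumes F_closed: "\<And>n. n \<ge> 1 \<Longrightarrow> closed (F n)"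
      and F_sub: "\<And>n. n \<ge> 1 \<Longrightarrow> F n \<subseteq> {0..1}"
      and F_mono: "\<And>n. n \<ge> 1 \<Longrightarrow> F n \<subseteq> F (Suc n)"
      and c_pos: "\<And>n. n \<ge> 1 \<Longrightarrow> c n > 0"
      and c_summable: "summable (\<lambda>k. 81^2 / 6 * real (Suc k) ^ 3 * c (Suc k))"
      and c_small: "(\<Sum>k. 81^2 / 6 * real (Suc k) ^ 3 * c (Suc k)) < 1"
begin

definition En :: "nat \<Rightarrow> real set" where "En k = E_set F (Suc k)"
definition S :: "(real \<times> real) set" where "S = UNIV \<times> {0..}"

definition "T k p = c (Suc k) * gap0 (En k) (fst p) * h_fun (Suc k) (snd p)"
definition "TX k p = c (Suc k) * gap1 (En k) (fst p) * h_fun (Suc k) (snd p)"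
definition "TZ k p = c (Suc k) * gap0 (En k) (fst p) * h1_fun (Suc k) (snd p)"
definition "TXX k p = c (Suc k) * gap2 (En k) (fst p) * h_fun (Suc k) (snd p)"
definition "TXZ k p = c (Suc k) * gap1 (En k) (fst p) * h1_fun (Suc k) (snd p)"
definition "TZZ k p = c (Suc k) * gap0 (En k) (fst p) * h2_fun (Suc k) (snd p)"

text \<open>A common summable majorant of all these functions on S.\<close>
definition "M k = 6000 * c (Suc k) * real (Suc k) ^ 3"

lemma c_Suc_pos: "0 < c (Suc k)"
  using c_pos by simp

lemma En_gap_set: "gap_set (En k)"
  unfolding En_def by (rule E_set_gap_set) (use F_closed F_sub in auto)

lemma En_mono: "k \<le> j \<Longrightarrow> En k \<subseteq> En j"
proof (induction j)
  case (Suc j)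
  have "En j \<subseteq> En (Suc j)" using F_mono[of "Suc j"] unfolding En_def E_set_def by auto
  then show ?case using Suc by (cases "k = Suc j") auto
qed simp

lemma f_eq: "f_fun F c x z = x^2 + (\<Sum>k. T k (x, z))"
  unfolding f_fun_def T_def En_def g_fun_eq_gap0 by simp

lemma S_convex: "convex S"
  unfolding S_def by (intro convex_Times) auto

lemma mem_S [simp]: "(x, z) \<in> S \<longleftrightarrow> 0 \<le> z"
  by (simp add: S_def)

lemma M_summable: "summable M"
proof -
  have "summable (\<lambda>k. (6000 / (81^2/6)) * (81^2 / 6 * real (Suc k) ^ 3 * c (Suc k)))"
    by (rule summable_mult[OF c_summable])
  then show ?thesis unfolding M_def by (simp add: algebra_simps)
qed

lemma term_bounds:
  assumes "p \<in> S"
  shows "\<bar>T k p\<bar> \<le> M k" "\<bar>TX k p\<bar> \<le> M k" "\<bar>TZ k p\<bar> \<le> M k"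
    "\<bar>TXX k p\<bar> \<le> M k" "\<bar>TXZ k p\<bar> \<le> M k" "\<bar>TZZ k p\<bar> \<le> M k"
proof -
  interpret gap_set "En k" by (rule En_gap_set)
  have bound: "\<bar>c (Suc k) * a * b\<bar> \<le> M k" if a: "\<bar>a\<bar> \<le> 1000" and b: "\<bar>b\<bar> \<le> 6 * real (Suc k) ^ 3" for a b
  proof -
    have "\<bar>a\<bar> * \<bar>b\<bar> \<le> 1000 * (6 * real (Suc k) ^ 3)" by (rule mult_mono) (use a b in auto)
    then show ?thesis using c_Suc_pos[of k] unfolding M_def by (simp add: abs_mult)
  qed
  have "0 \<le> snd p" "1 \<le> Suc k" using assms unfolding S_def by auto
  note h = h_fun_bounds[OF this]
  note g = gap_bounds_uniform[of "fst p"]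
  show "\<bar>T k p\<bar> \<le> M k" "\<bar>TX k p\<bar> \<le> M k" "\<bar>TZ k p\<bar> \<le> M k"
    "\<bar>TXX k p\<bar> \<le> M k" "\<bar>TXZ k p\<bar> \<le> M k" "\<bar>TZZ k p\<bar> \<le> M k"
    unfolding T_def TX_def TZ_def TXX_def TXZ_def TZZ_def by (intro bound g h)+
qed

lemma term_summable:
  assumes "p \<in> S"
  shows "summable (\<lambda>k. T k p)" "summable (\<lambda>k. TX k p)" "summable (\<lambda>k. TZ k p)"
  by (rule summable_comparison_test[OF _ M_summable]; use term_bounds[OF assms] in auto)+

lemma T_nonneg: "0 \<le> T k p"
proof -
  interpret gap_set "En k" by (rule En_gap_set)
  show ?thesis unfolding T_def h_fun_def using c_Suc_pos[of k] gap0_nonneg[of "fst p"] by simp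
qed

lemma TZ_nonpos: "TZ k p \<le> 0"
proof -
  interpret gap_set "En k" by (rule En_gap_set)
  have "0 \<le> c (Suc k) * gap0 (En k) (fst p)" using c_Suc_pos[of k] gap0_nonneg[of "fst p"] by simp
  moreover have "h1_fun (Suc k) (snd p) \<le> 0" unfolding h1_fun_def by simp
  ultimately show ?thesis unfolding TZ_def by (simp add: mult_nonneg_nonpos)
qed

lemma term_derivatives:
  "(T k has_derivative (\<lambda>d. TX k p * fst d + TZ k p * snd d)) (at p within A)"
  "(TX k has_derivative (\<lambda>d. TXX k p * fst d + TXZ k p * snd d)) (at p within A)"
  "(TZ k has_derivative (\<lambda>d. TXZ k p * fst d + TZZ k p * snd d)) (at p within A)"
proof -
  interpret gap_set "En k" by (rule En_gap_set)
  show "(T k has_derivative (\<lambda>d. TX k p * fst d + TZ k p * snd d)) (at p within A)"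
    unfolding T_def[abs_def] TX_def TZ_def by (rule product_has_derivative[OF gap0_deriv h_fun_deriv])
  show "(TX k has_derivative (\<lambda>d. TXX k p * fst d + TXZ k p * snd d)) (at p within A)"
    unfolding TX_def[abs_def] TXX_def TXZ_def by (rule product_has_derivative[OF gap1_deriv h_fun_deriv])
  show "(TZ k has_derivative (\<lambda>d. TXZ k p * fst d + TZZ k p * snd d)) (at p within A)"
    unfolding TZ_def[abs_def] TXZ_def TZZ_def by (rule product_has_derivative[OF gap0_deriv h1_fun_deriv])
qed

lemma second_partials_continuous_terms:
  "continuous_on A (TXX k)" "continuous_on A (TXZ k)" "continuous_on A (TZZ k)"
proof -
  interpret gap_set "En k" by (rule En_gap_set)
  have coord: "continuous_on A (\<lambda>p::real \<times> real. g (fst p))" "continuous_on A (\<lambda>p::real \<times> real. g (snd p))"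
    if "\<And>x. isCont g x" for g :: "real \<Rightarrow> real"
    using that continuous_at_imp_continuous_on[of UNIV g]
    by (auto intro!: continuous_on_compose2[of UNIV g] continuous_intros)
  note isCont = gap2_isCont DERIV_isCont[OF gap1_deriv] DERIV_isCont[OF gap0_deriv]
    DERIV_isCont[OF h_fun_deriv] DERIV_isCont[OF h1_fun_deriv] h2_fun_isCont
  show "continuous_on A (TXX k)" "continuous_on A (TXZ k)" "continuous_on A (TZZ k)"
    unfolding TXX_def[abs_def] TXZ_def[abs_def] TZZ_def[abs_def]
    by (intro continuous_intros coord isCont)+
qed

definition "fx p = 2 * fst p + (\<Sum>k. TX k p)"
definition "fz p = (\<Sum>k. TZ k p)"
definition "fxx p = 2 + (\<Sum>k. TXX k p)"
definition "fxz p = (\<Sum>k. TXZ k p)"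
definition "fzz p = (\<Sum>k. TZZ k p)"

lemma f_has_derivative:
  assumes "p \<in> S"
  shows "((\<lambda>p. f_fun F c (fst p) (snd p)) has_derivative (\<lambda>d. fx p * fst d + fz p * snd d)) (at p within S)"
proof -
  have "((\<lambda>p. \<Sum>k. T k p) has_derivative (\<lambda>d. (\<Sum>k. TX k p) * fst d + (\<Sum>k. TZ k p) * snd d))
      (at p within S)"
    by (rule series_has_derivative[OF S_convex term_derivatives(1) _ _ M_summable term_summable(1) assms])
       (use term_bounds in auto)
  then have "((\<lambda>p. (fst p)^2 + (\<Sum>k. T k p)) has_derivative
       (\<lambda>d. 2 * fst p * fst d + ((\<Sum>k. TX k p) * fst d + (\<Sum>k. TZ k p) * snd d))) (at p within S)"
    by (intro has_derivative_add) (auto intro!: derivative_eq_intros)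
  then show ?thesis unfolding f_eq fx_def fz_def prod.collapse
    by (rule has_derivative_eq_rhs) (auto simp: algebra_simps)
qed

lemma fx_has_derivative:
  assumes "p \<in> S"
  shows "(fx has_derivative (\<lambda>d. fxx p * fst d + fxz p * snd d)) (at p within S)"
proof -
  have "((\<lambda>p. \<Sum>k. TX k p) has_derivative (\<lambda>d. (\<Sum>k. TXX k p) * fst d + (\<Sum>k. TXZ k p) * snd d))
      (at p within S)"
    by (rule series_has_derivative[OF S_convex term_derivatives(2) _ _ M_summable term_summable(2) assms])
       (use term_bounds in auto)
  then have "((\<lambda>p. 2 * fst p + (\<Sum>k. TX k p)) has_derivative
       (\<lambda>d. 2 * fst d + ((\<Sum>k. TXX k p) * fst d + (\<Sum>k. TXZ k p) * snd d))) (at p within S)"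
    by (intro has_derivative_add) (auto intro!: derivative_eq_intros)
  then show ?thesis unfolding fx_def[abs_def] fxx_def fxz_def
    by (rule has_derivative_eq_rhs) (auto simp: algebra_simps)
qed

lemma fz_has_derivative:
  assumes "p \<in> S"
  shows "(fz has_derivative (\<lambda>d. fxz p * fst d + fzz p * snd d)) (at p within S)"
  unfolding fz_def[abs_def] fxz_def fzz_def
  by (rule series_has_derivative[OF S_convex term_derivatives(3) _ _ M_summable term_summable(3) assms])
     (use term_bounds in auto)

lemma f_C2: "C2_on S (\<lambda>p. f_fun F c (fst p) (snd p))"
proof (rule C2_on_from_partials[OF f_has_derivative fx_has_derivative fz_has_derivative])
  have "continuous_on S (\<lambda>p. \<Sum>k. TXX k p)"
    by (rule series_continuous_on[OF second_partials_continuous_terms(1) _ M_summable]) (use term_bounds in auto)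
  then show "continuous_on S fxx" unfolding fxx_def[abs_def] by (intro continuous_intros)
  show "continuous_on S fxz" "continuous_on S fxz" unfolding fxz_def[abs_def]
    by (rule series_continuous_on[OF second_partials_continuous_terms(2) _ M_summable]; use term_bounds in auto)+
  show "continuous_on S fzz" unfolding fzz_def[abs_def]
    by (rule series_continuous_on[OF second_partials_continuous_terms(3) _ M_summable]) (use term_bounds in auto)
qed

text \<open>Since all terms are nonnegative, f(x,z) = x^2 exactly when every term vanishes.\<close>
lemma f_ge_square: "0 \<le> z \<Longrightarrow> x^2 \<le> f_fun F c x z"
  unfolding f_eq using term_summable(1)[of "(x, z)"] T_nonneg by (simp add: suminf_nonneg)

lemma f_eq_square_iff: "0 \<le> z \<Longrightarrow> f_fun F c x z = x^2 \<longleftrightarrow> (\<forall>k. T k (x, z) = 0)"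
  unfolding f_eq using suminf_eq_zero_iff[OF term_summable(1)[of "(x, z)"]] T_nonneg by simp

lemma T_eq_0_iff: "T k (x, z) = 0 \<longleftrightarrow> x \<in> En k \<or> real (Suc k) \<le> z"
proof -
  interpret gap_set "En k" by (rule En_gap_set)
  have "h_fun (Suc k) z = 0 \<longleftrightarrow> real (Suc k) \<le> z" unfolding h_fun_def by auto
  then show ?thesis unfolding T_def using c_Suc_pos[of k] gap0_eq_0_iff[of x] by auto
qed

text \<open>Part (iii): if x lies in E_n then f(x,n) = x^2, by monotonicity of the E_n; conversely
  f(x,z) = x^2 forces x into E_(k+1) for any k + 1 > z.\<close>
lemma f_eq_square_iff_E: "x \<in> (\<Union>n\<in>{1..}. E_set F n) \<longleftrightarrow> (\<exists>z\<ge>0. f_fun F c x z = x^2)"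
proof
  assume "x \<in> (\<Union>n\<in>{1..}. E_set F n)"
  then obtain n where n: "1 \<le> n" "x \<in> E_set F n" by auto
  then obtain m where "n = Suc m" using not0_implies_Suc by force
  then have m: "x \<in> En m" using n unfolding En_def by simp
  have "T k (x, real (Suc m)) = 0" for k
  proof (cases "m \<le> k")
    case True then show ?thesis using En_mono[OF True] m T_eq_0_iff by blast
  next
    case False then show ?thesis using T_eq_0_iff by simp
  qed
  then have "f_fun F c x (real (Suc m)) = x^2" using f_eq_square_iff[of "real (Suc m)"] by simp
  then show "\<exists>z\<ge>0. f_fun F c x z = x^2" by (intro exI[of _ "real (Suc m)"]) simp
next
  assume "\<exists>z\<ge>0. f_fun F c x z = x^2"
  then obtain z where z: "0 \<le> z" "f_fun F c x z = x^2" by auto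
  obtain k where k: "z < real k" using reals_Archimedean2 by blast
  have "T k (x, z) = 0" using f_eq_square_iff[OF z(1)] z(2) by blast
  then have "x \<in> En k" using k T_eq_0_iff by simp
  then show "x \<in> (\<Union>n\<in>{1..}. E_set F n)" unfolding En_def by auto
qed

text \<open>Part (iv): where f > x^2 some term is positive, and its z-derivative is negative.\<close>
lemma fz_negative:
  assumes z: "0 \<le> z" and gt: "x^2 < f_fun F c x z"
  shows "fz (x, z) < 0"
proof -
  obtain k where k: "T k (x, z) \<noteq> 0" using gt f_eq_square_iff[OF z, of x] by force
  interpret gap_set "En k" by (rule En_gap_set)
  have "0 < gap0 (En k) x" "real (Suc k) > z"
    using k gap0_nonneg[of x] T_eq_0_iff gap0_eq_0_iff by (auto simp: order_less_le)
  then have "TZ k (x, z) < 0"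
    unfolding TZ_def h1_fun_def using c_Suc_pos[of k] by (simp add: mult_pos_neg)
  then have "0 < (\<Sum>j. - TZ j (x, z))"
    using summable_minus[OF term_summable(3)] TZ_nonpos z by (intro suminf_pos2) auto
  then show ?thesis unfolding fz_def using suminf_minus[OF term_summable(3)] z by simp
qed

text \<open>fz is the partial derivative of f in z, restricting the gradient to a vertical line.\<close>
lemma f_partial_z:
  assumes "0 \<le> z"
  shows "((\<lambda>t. f_fun F c x t) has_real_derivative fz (x, z)) (at z within {0..})"
proof -
  have "((\<lambda>t. (x, t)) has_derivative (\<lambda>h. (0, h))) (at z within {0..})"
    by (auto intro!: derivative_eq_intros)
  moreover have "(\<lambda>t. (x, t)) ` {0..} \<subseteq> S" unfolding S_def by auto
  then have "((\<lambda>p. f_fun F c (fst p) (snd p)) has_derivative (\<lambda>d. fx (x, z) * fst d + fz (x, z) * snd d))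
      (at ((\<lambda>t. (x, t)) z) within (\<lambda>t. (x, t)) ` {0..})"
    using has_derivative_subset[OF f_has_derivative] assms by simp
  ultimately have "((\<lambda>t. f_fun F c x t) has_derivative (\<lambda>h. fz (x, z) * h)) (at z within {0..})"
    using has_derivative_in_compose by fastforce
  then show ?thesis unfolding has_field_derivative_def .
qed

text \<open>Convexity: each w_k x^2 + T_k is convex, and f is the sum of these and (1 - sum w_k) x^2.\<close>
definition "w k = 81^2 / 6 * real (Suc k) ^ 3 * c (Suc k)"
definition "Q k p = w k * (fst p)^2 + T k p"

text \<open>The Hessian quadratic form of Q_k at a point of S is positive semidefinite.\<close>
lemma Q_hessian_nonneg:
  assumes z: "0 \<le> z"
  shows "0 \<le> 2 * w k * A^2 + c (Suc k) * (gap2 (En k) x * A * A * h_fun (Suc k) z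
      + 2 * gap1 (En k) x * A * (h1_fun (Suc k) z * B) + gap0 (En k) x * (h2_fun (Suc k) z * B * B))"
proof -
  interpret gap_set "En k" by (rule En_gap_set)
  have m: "0 \<le> max (real (Suc k) - z) 0" "max (real (Suc k) - z) 0 \<le> real (Suc k)" using z by auto
  have "x - lower_pt (En k) x + (upper_pt (En k) x - x) \<le> 3" using gap_coords(3)[of x] by simp
  from second_variation_nonneg[OF gap_coords(1,2) this m c_Suc_pos w_def, of A B]
  show ?thesis unfolding gap0_def gap1_def gap2_def h_fun_def h1_fun_def h2_fun_def by simp
qed

text \<open>Q_k is convex along every segment in S: its second derivative there is the Hessian form.\<close>
lemma Q_convex_on_segment:
  assumes pq: "p \<in> S" "q \<in> S"
  shows "convex_on {0..1} (\<lambda>s. Q k ((1 - s) *\<^sub>R p + s *\<^sub>R q))"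
proof -
  interpret gap_set "En k" by (rule En_gap_set)
  define A where "A = fst q - fst p"
  define B where "B = snd q - snd p"
  define X where "X s = fst p + s * A" for s
  define Z where "Z s = snd p + s * B" for s
  define E where "E = En k"
  define n where "n = Suc k"
  define cn where "cn = c n"
  define wk where "wk = w k"
  define \<psi> where "\<psi> s = wk * (X s)^2 + cn * gap0 E (X s) * h_fun n (Z s)" for s
  define \<psi>' where "\<psi>' s = 2 * wk * X s * A
      + cn * (gap1 E (X s) * A * h_fun n (Z s) + gap0 E (X s) * (h1_fun n (Z s) * B))" for s
  define \<psi>'' where "\<psi>'' s = 2 * wk * A^2 + cn * (gap2 E (X s) * A * A * h_fun n (Z s)
      + 2 * gap1 E (X s) * A * (h1_fun n (Z s) * B) + gap0 E (X s) * (h2_fun n (Z s) * B * B))" for s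
  have dX: "(X has_real_derivative A) (at s)" and dZ: "(Z has_real_derivative B) (at s)" for s
    unfolding X_def[abs_def] Z_def[abs_def] by (auto intro!: derivative_eq_intros)
  have g0: "((\<lambda>s. gap0 E (X s)) has_real_derivative gap1 E (X s) * A) (at s)"
    and g1: "((\<lambda>s. gap1 E (X s)) has_real_derivative gap2 E (X s) * A) (at s)"
    and h0: "((\<lambda>s. h_fun n (Z s)) has_real_derivative h1_fun n (Z s) * B) (at s)"
    and h1: "((\<lambda>s. h1_fun n (Z s)) has_real_derivative h2_fun n (Z s) * B) (at s)" for s
    unfolding E_def by (intro DERIV_chain2[OF gap0_deriv dX] DERIV_chain2[OF gap1_deriv dX]
      DERIV_chain2[OF h_fun_deriv dZ] DERIV_chain2[OF h1_fun_deriv dZ])+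
  have D1: "(\<psi> has_real_derivative \<psi>' s) (at s)" for s
    unfolding \<psi>_def[abs_def] \<psi>'_def by (auto intro!: derivative_eq_intros g0 h0 dX simp: algebra_simps)
  have D2: "(\<psi>' has_real_derivative \<psi>'' s) (at s)" for s
    unfolding \<psi>'_def[abs_def] \<psi>''_def
    by (auto intro!: derivative_eq_intros g0 g1 h0 h1 dX simp: algebra_simps power2_eq_square)
  have "0 \<le> \<psi>'' s" if s: "s \<in> {0..1}" for s
  proof -
    have "Z s = (1 - s) * snd p + s * snd q" unfolding Z_def B_def by (simp add: algebra_simps)
    then have "0 \<le> Z s" using s pq unfolding S_def by (auto intro!: add_nonneg_nonneg mult_nonneg_nonneg)
    from Q_hessian_nonneg[OF this, of k A "X s" B]
    show ?thesis unfolding \<psi>''_def E_def cn_def wk_def n_def .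
  qed
  then have "convex_on {0..1} \<psi>" by (rule f''_ge0_imp_convex[OF convex_real_interval(5) D1 D2])
  moreover have "\<psi> = (\<lambda>s. Q k ((1 - s) *\<^sub>R p + s *\<^sub>R q))"
    unfolding \<psi>_def Q_def T_def X_def Z_def A_def B_def E_def cn_def wk_def n_def
    by (simp add: algebra_simps)
  ultimately show ?thesis by simp
qed

lemma f_convex: "convex_on S (\<lambda>p. f_fun F c (fst p) (snd p))"
proof (rule convex_on_cong_on)
  have w_summable: "summable w" using c_summable unfolding w_def[abs_def] .
  have Q_summable: "summable (\<lambda>k. Q k p)" if "p \<in> S" for p
    unfolding Q_def using summable_add[OF summable_mult2[OF w_summable] term_summable(1)[OF that]] by simp
  have "0 \<le> 1 - (\<Sum>k. w k)" using c_small unfolding w_def by simp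
  moreover have "convex_on S (Q k)" for k
    by (rule convex_on_segmentsI[OF S_convex Q_convex_on_segment])
  then have "convex_on S (\<lambda>p. \<Sum>k. Q k p)"
    by (rule convex_on_suminf[OF S_convex]) (rule Q_summable)
  ultimately show "convex_on S (\<lambda>p. (1 - (\<Sum>k. w k)) * (fst p)^2 + (\<Sum>k. Q k p))"
    by (intro convex_on_add convex_on_cmul convex_on_fst_square S_convex)
  fix p assume p: "p \<in> S"
  have "(\<Sum>k. Q k p) = (\<Sum>k. w k * (fst p)^2) + (\<Sum>k. T k p)"
    unfolding Q_def by (rule suminf_add[OF summable_mult2[OF w_summable] term_summable(1)[OF p], symmetric])
  also have "(\<Sum>k. w k * (fst p)^2) = (\<Sum>k. w k) * (fst p)^2"
    by (rule suminf_mult2[OF w_summable, symmetric])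
  finally show "(1 - (\<Sum>k. w k)) * (fst p)^2 + (\<Sum>k. Q k p) = f_fun F c (fst p) (snd p)"
    unfolding f_eq by (simp add: algebra_simps)
qed

end

theorem lemma6:
  fixes F :: "nat \<Rightarrow> real set" and c :: "nat \<Rightarrow> real"
  assumes F_closed: "\<And>n. n \<ge> 1 \<Longrightarrow> closed (F n)"
      and F_sub: "\<And>n. n \<ge> 1 \<Longrightarrow> F n \<subseteq> {0..1}"
      and F_mono: "\<And>n. n \<ge> 1 \<Longrightarrow> F n \<subseteq> F (Suc n)"
      and c_pos: "\<And>n. n \<ge> 1 \<Longrightarrow> c n > 0"
      and c_summable: "summable (\<lambda>k. 81^2 / 6 * real (Suc k) ^ 3 * c (Suc k))"
      and c_small: "(\<Sum>k. 81^2 / 6 * real (Suc k) ^ 3 * c (Suc k)) < 1"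
  shows "(\<forall>x z. z \<ge> 0 \<longrightarrow> f_fun F c x z \<ge> x ^ 2)
    \<and> C2_on (UNIV \<times> {0..}) (\<lambda>p. f_fun F c (fst p) (snd p))
    \<and> convex_on (UNIV \<times> {0..}) (\<lambda>p. f_fun F c (fst p) (snd p))
    \<and> (\<forall>x. x \<in> (\<Union>n\<in>{1..}. E_set F n) \<longleftrightarrow> (\<exists>z\<ge>0. f_fun F c x z = x ^ 2))
    \<and> (\<forall>x z. z \<ge> 0 \<longrightarrow> f_fun F c x z > x ^ 2 \<longrightarrow>
          (\<exists>D. ((\<lambda>t. f_fun F c x t) has_real_derivative D) (at z within {0..}) \<and> D < 0))"
proof -
  interpret construction F c by (rule construction.intro) (use assms in auto)
  have part_iv: "\<exists>D. ((\<lambda>t. f_fun F c x t) has_real_derivative D) (at z within {0..}) \<and> D < 0"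
    if "0 \<le> z" "x^2 < f_fun F c x z" for x z
    using f_partial_z[OF that(1)] fz_negative[OF that] by blast
  show ?thesis
  proof (intro conjI allI impI)
    show "x^2 \<le> f_fun F c x z" if "0 \<le> z" for x z using f_ge_square[OF that] .
    show "C2_on (UNIV \<times> {0..}) (\<lambda>p. f_fun F c (fst p) (snd p))" using f_C2 unfolding S_def .
    show "convex_on (UNIV \<times> {0..}) (\<lambda>p. f_fun F c (fst p) (snd p))" using f_convex unfolding S_def .
  qed (use f_eq_square_iff_E part_iv in auto)
qed

end
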